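(* Let $n\geq 5$ be an integer. There is a set $X$ of partitions of $n$ with the following properties: (1) there is no integer $1\le i\le n/2$ which is a partial sum of $x$ for every $x\in X$; (2) for every $x\in X$ there exists an integer $1\le i\le n/2$ which is a partial sum of $y$ for every $y\in X\setminus\{x\}$; (3) $|X|>\frac n2-\log n$.
   Context: Logarithms are in base $2$. A partition of $n$ is a finite multiset $(a_1,\dots,a_t)$ of positive integers with sum $n$. An integer $m$ is a partial sum of $(a_1,\dots,a_t)$ if $m=a_{j_1}+\cdots+a_{j_\ell}$ for some $\ell\ge 1$ and $1\le j_1<\dots<j_\ell\le t$. *)

theory Defs
  imports Complex_Main "HOL-Library.Multiset"
begin

definition is_partition :: "nat \<Rightarrow> nat multiset \<Rightarrow> bool" where
  "is_partition n x \<longleftrightarrow> (\<forall>a \<in># x. a > 0) \<and> sum_mset x = n"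

definition is_partial_sum :: "nat \<Rightarrow> nat multiset \<Rightarrow> bool" where
  "is_partial_sum m x \<longleftrightarrow> (\<exists>y. y \<subseteq># x \<and> y \<noteq> {#} \<and> sum_mset y = m)"

end

(*
  A family of partitions x_v of n, indexed by a set R of values in [1, n/2], works as soon as
  v is the only value of R that is not a partial sum of x_v, and every value of [1, n/2] outside
  R fails to be a partial sum of some x_v; the family then has |R| members. For large n, R
  consists of all values except the halvings s, s/2, s/4, ... of s = (n/2 - 1)/3, together with
  n/2 in two residue classes, so only about log n values are lost.

  The x_v are built from gap partitions: partitions of T whose subset sums are all of 0..T
  except a and T - a. These exist for most pairs (a, T), starting from a - 1 ones and a part
  a + 1 or a + 2 and repeatedly adding one large part. A value v close to n/2 is isolated by a
  gap partition of v + w with v + w >= n/2, where the second gap w is a halving; the halvings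
  are dense enough (every d has one in [d, 2d)) for this. Small n are handled by a table.
*)
theory Submission
  imports Defs "HOL-Library.Log_Nat"
begin

definition subset_sums :: "nat multiset \<Rightarrow> nat set" where
  "subset_sums x = sum_mset ` {y. y \<subseteq># x}"

lemma subset_sums_empty [simp]: "subset_sums {#} = {0}"
  by (auto simp: subset_sums_def)

lemma subseteq_add_mset_iff:
  "y \<subseteq># add_mset p x \<longleftrightarrow> y \<subseteq># x \<or> (\<exists>z. y = add_mset p z \<and> z \<subseteq># x)"
proof
  assume y: "y \<subseteq># add_mset p x"
  show "y \<subseteq># x \<or> (\<exists>z. y = add_mset p z \<and> z \<subseteq># x)"
  proof (cases "p \<in># y")
    case True
    then have "y = add_mset p (y - {#p#})" by simp
    with y show ?thesis by (metis mset_subset_eq_add_mset_cancel)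
  next
    case False
    have "count y a \<le> count x a" for a
      using mset_subset_eq_count[OF y, of a] False by (cases "a = p") (auto simp: not_in_iff)
    then show ?thesis by (simp add: mset_subset_eqI)
  qed
next
  assume "y \<subseteq># x \<or> (\<exists>z. y = add_mset p z \<and> z \<subseteq># x)"
  then show "y \<subseteq># add_mset p x"
  proof
    assume "y \<subseteq># x"
    then show ?thesis by (rule subset_mset.order_trans) simp
  qed (auto simp: mset_subset_eq_add_mset_cancel)
qed

lemma subset_sums_add_mset:
  "subset_sums (add_mset p x) = subset_sums x \<union> (+) p ` subset_sums x"
proof -
  have "{y. y \<subseteq># add_mset p x} = {y. y \<subseteq># x} \<union> add_mset p ` {y. y \<subseteq># x}"
    by (auto simp: subseteq_add_mset_iff)
  then show ?thesis
    unfolding subset_sums_def by (simp add: image_Un image_image)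
qed

lemma mem_subset_sums_add_mset [simp]:
  "t \<in> subset_sums (add_mset p x) \<longleftrightarrow> t \<in> subset_sums x \<or> (p \<le> t \<and> t - p \<in> subset_sums x)"
  unfolding subset_sums_add_mset by (auto simp: image_iff intro: bexI[of _ "t - p"])

lemma is_partial_sum_iff_subset_sums:
  "1 \<le> i \<Longrightarrow> is_partial_sum i x \<longleftrightarrow> i \<in> subset_sums x"
  unfolding is_partial_sum_def subset_sums_def by force

lemma subset_sums_replicate_one: "subset_sums (replicate_mset k 1) = {..k}"
  by (induction k) auto

lemma is_partition_add_mset:
  "is_partition T S \<Longrightarrow> 0 < p \<Longrightarrow> is_partition (T + p) (add_mset p S)"
  by (auto simp: is_partition_def)

definition gap_partition :: "nat \<Rightarrow> nat \<Rightarrow> nat multiset \<Rightarrow> bool" where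
  "gap_partition a T S \<longleftrightarrow> is_partition T S \<and> subset_sums S = {..T} - {a, T - a}"

lemma mem_subset_sums_gap_partition:
  "gap_partition a T S \<Longrightarrow> t \<in> subset_sums S \<longleftrightarrow> t \<le> T \<and> t \<noteq> a \<and> t \<noteq> T - a"
  by (auto simp: gap_partition_def)

lemma gap_partition_ones:
  assumes "1 \<le> a" "e \<le> 1"
  shows "gap_partition a (2 * a + e) (add_mset (a + 1 + e) (replicate_mset (a - 1) 1))"
  unfolding gap_partition_def
proof
  show "is_partition (2 * a + e) (add_mset (a + 1 + e) (replicate_mset (a - 1) 1))"
    using assms by (auto simp: is_partition_def)
  show "subset_sums (add_mset (a + 1 + e) (replicate_mset (a - 1) 1)) = {..2 * a + e} - {a, 2 * a + e - a}"
    unfolding subset_sums_add_mset subset_sums_replicate_one atMost_atLeast0 image_add_atLeastAtMost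
    using assms by auto
qed

lemma gap_partition_add_mset:
  assumes S: "gap_partition a T S" and p: "a < p" "p \<le> T + 1"
    and "T = 2 * a \<or> (p + a \<le> T \<and> p + 2 * a \<noteq> T)"
  shows "gap_partition a (T + p) (add_mset p S)"
  unfolding gap_partition_def
proof
  show "is_partition (T + p) (add_mset p S)"
    using S p is_partition_add_mset[of T S p] by (simp add: gap_partition_def)
  show "subset_sums (add_mset p S) = {..T + p} - {a, T + p - a}"
  proof (rule set_eqI)
    fix t
    have "t \<in> subset_sums (add_mset p S) \<longleftrightarrow> t \<le> T + p \<and> t \<noteq> a \<and> t \<noteq> T + p - a"
      unfolding mem_subset_sums_add_mset mem_subset_sums_gap_partition[OF S]
      using assms(4) p by (elim disjE conjE) arith+
    then show "t \<in> subset_sums (add_mset p S) \<longleftrightarrow> t \<in> {..T + p} - {a, T + p - a}"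
      by simp
  qed
qed

lemma gap_partition_exists:
  assumes "1 \<le> a"
    and "T = 2 * a \<or> T = 2 * a + 1 \<or> (3 * a + 1 \<le> T \<and> T \<le> 4 * a + 1) \<or>
      (4 * a + 3 \<le> T \<and> \<not> (a = 1 \<and> T = 8))"
  shows "\<exists>S. gap_partition a T S"
  using assms(2)
proof (induction T rule: less_induct)
  case (less T)
  have step: "\<exists>S. gap_partition a T S"
    if "T' < T" "gap_partition a T' S'" "a < T - T'" "T - T' \<le> T' + 1"
      "T' = 2 * a \<or> (T - T' + a \<le> T' \<and> T - T' + 2 * a \<noteq> T')" for T' S'
    using gap_partition_add_mset[OF that(2-5)] that(1) by auto
  consider "T = 2 * a \<or> T = 2 * a + 1" | "3 * a + 1 \<le> T" "T \<le> 4 * a + 1"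
    | "T = 5 * a + 3" "2 \<le> a" | "a = 1" "T = 10"
    | "4 * a + 3 \<le> T" "T \<noteq> 5 * a + 3" "a = 1 \<longrightarrow> T \<noteq> 8 \<and> T \<noteq> 10"
    using less.prems assms(1) by fastforce
  then show ?case
  proof cases
    case 1
    then show ?thesis
      using gap_partition_ones[OF assms(1), of 0] gap_partition_ones[OF assms(1), of 1] by auto
  next
    case 2
    then show ?thesis using step[OF _ gap_partition_ones[OF assms(1), of 0]] assms(1) by simp
  next
    case 3
    obtain S' where "gap_partition a (4 * a + 1) S'"
      using less.IH[of "4 * a + 1"] 3 by auto
    then show ?thesis
      by (rule step[rotated]) (use 3 in arith)+
  next
    case 4
    obtain S' where "gap_partition a 7 S'"
      using less.IH[of 7] 4 by auto
    then show ?thesis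
      by (rule step[rotated]) (use 4 in arith)+
  next
    case 5
    have "\<exists>S'. gap_partition a (T - (a + 1)) S'"
      using 5 assms(1) by (intro less.IH) (simp_all, arith)
    then obtain S' where "gap_partition a (T - (a + 1)) S'" ..
    then show ?thesis
      by (rule step[rotated]) (use 5 assms(1) in arith)+
  qed
qed

lemma floorlog_le_log: "0 < n \<Longrightarrow> real (floorlog 2 n) \<le> log 2 n + 1"
  by (simp add: floorlog_def)

definition halvings :: "nat \<Rightarrow> nat set" where
  "halvings D = {D div 2 ^ j | j. 0 < D div 2 ^ j}"

lemma halvings_bounds:
  assumes "w \<in> halvings D" shows "1 \<le> w" "w = D \<or> 2 * w \<le> D"
proof -
  obtain j where w: "w = D div 2 ^ j" "0 < w" using assms by (auto simp: halvings_def)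
  then show "1 \<le> w" by simp
  show "w = D \<or> 2 * w \<le> D"
  proof (cases j)
    case (Suc i)
    have "2 * (D div 2 div 2 ^ i) \<le> D" using div_le_dividend[of "D div 2" "2 ^ i"] by linarith
    then show ?thesis using w Suc by (simp add: div_mult2_eq mult.commute)
  qed (use w in simp)
qed

lemma self_in_halvings: "0 < D \<Longrightarrow> D \<in> halvings D"
  unfolding halvings_def by (auto intro: exI[of _ 0])

lemma halvings_dense:
  "1 \<le> d \<Longrightarrow> d \<le> D \<Longrightarrow> \<exists>w\<in>halvings D. d \<le> w \<and> w < 2 * d"
proof (induction D rule: less_induct)
  case (less D)
  show ?case
  proof (cases "D < 2 * d")
    case True
    then show ?thesis using less.prems self_in_halvings[of D] by auto
  next
    case False
    then have "d \<le> D div 2" by presburger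
    then obtain w where w: "w \<in> halvings (D div 2)" "d \<le> w" "w < 2 * d"
      using less.IH[of "D div 2"] less.prems by auto
    then obtain j where "w = D div 2 div 2 ^ j" "0 < w" by (auto simp: halvings_def)
    then have "w \<in> halvings D"
      unfolding halvings_def by (auto simp: div_mult2_eq intro: exI[of _ "Suc j"])
    then show ?thesis using w by blast
  qed
qed

lemma card_halvings_le_log: "0 < D \<Longrightarrow> real (card (halvings D)) \<le> log 2 D + 1"
proof -
  assume D: "0 < D"
  have "halvings D \<subseteq> (\<lambda>j. D div 2 ^ j) ` {..<floorlog 2 D}"
  proof
    fix w assume "w \<in> halvings D"
    then obtain j where j: "w = D div 2 ^ j" "0 < w" by (auto simp: halvings_def)
    have "j < floorlog 2 D"
    proof (rule ccontr)
      assume "\<not> j < floorlog 2 D"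
      then have "D < 2 ^ j" using floorlog_leD[of 2 D j] by simp
      then show False using j by simp
    qed
    then show "w \<in> (\<lambda>j. D div 2 ^ j) ` {..<floorlog 2 D}" using j by blast
  qed
  then have "card (halvings D) \<le> card ((\<lambda>j. D div 2 ^ j) ` {..<floorlog 2 D})"
    by (intro card_mono) auto
  also have "\<dots> \<le> floorlog 2 D"
    using card_image_le[of "{..<floorlog 2 D}"] by simp
  finally have "card (halvings D) \<le> floorlog 2 D" .
  then show ?thesis using floorlog_le_log[OF D] by linarith
qed

definition critical_family :: "nat \<Rightarrow> nat multiset set \<Rightarrow> bool" where
  "critical_family n X \<longleftrightarrow> (\<forall>x\<in>X. is_partition n x) \<and>
     \<not> (\<exists>i. 1 \<le> i \<and> 2 * i \<le> n \<and> (\<forall>x\<in>X. is_partial_sum i x)) \<and>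
     (\<forall>x\<in>X. \<exists>i. 1 \<le> i \<and> 2 * i \<le> n \<and> (\<forall>y\<in>X - {x}. is_partial_sum i y))"

lemma critical_family_image:
  assumes V: "V \<subseteq> {1..n div 2}"
    and part: "\<forall>v\<in>V. is_partition n (f v)"
    and miss: "\<forall>v\<in>V. v \<notin> subset_sums (f v)"
    and hit: "\<forall>v\<in>V. \<forall>u\<in>V. u \<noteq> v \<longrightarrow> u \<in> subset_sums (f v)"
    and cover: "\<forall>i\<in>{1..n div 2} - V. \<exists>v\<in>V. i \<notin> subset_sums (f v)"
  shows "critical_family n (f ` V)" "card (f ` V) = card V"
proof -
  have "inj_on f V"
  proof (rule inj_onI)
    fix u v assume uv: "u \<in> V" "v \<in> V" "f u = f v"
    show "u = v"
    proof (rule ccontr)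
      assume "u \<noteq> v"
      then have "u \<in> subset_sums (f u)" using hit uv by auto
      then show False using miss uv(1) by blast
    qed
  qed
  then show "card (f ` V) = card V" by (rule card_image)
  have no_common: False
    if "1 \<le> i" "2 * i \<le> n" "\<forall>x\<in>f ` V. is_partial_sum i x" for i
  proof -
    have sums: "i \<in> subset_sums (f v)" if "v \<in> V" for v
      using that \<open>\<forall>x\<in>f ` V. is_partial_sum i x\<close> is_partial_sum_iff_subset_sums[OF \<open>1 \<le> i\<close>]
      by blast
    show False
    proof (cases "i \<in> V")
      case True
      then show False using sums miss by blast
    next
      case False
      then have "i \<in> {1..n div 2} - V" using that(1,2) by auto
      then show False using cover sums by blast
    qed
  qed
  have common_but_one: "is_partial_sum v y" if v: "v \<in> V" and y: "y \<in> f ` V - {f v}" for v y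
  proof -
    obtain u where "u \<in> V" "u \<noteq> v" "y = f u" using y by auto
    moreover have "1 \<le> v" using v V by auto
    ultimately show "is_partial_sum v y"
      using v hit is_partial_sum_iff_subset_sums[of v] by auto
  qed
  show "critical_family n (f ` V)"
    unfolding critical_family_def
  proof (intro conjI ballI)
    show "is_partition n x" if "x \<in> f ` V" for x using that part by blast
    show "\<not> (\<exists>i. 1 \<le> i \<and> 2 * i \<le> n \<and> (\<forall>x\<in>f ` V. is_partial_sum i x))"
      using no_common by blast
    show "\<exists>i. 1 \<le> i \<and> 2 * i \<le> n \<and> (\<forall>y\<in>f ` V - {x}. is_partial_sum i y)"
      if "x \<in> f ` V" for x
    proof -
      obtain v where "v \<in> V" "x = f v" using \<open>x \<in> f ` V\<close> by blast
      moreover have "1 \<le> v" "2 * v \<le> n"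
        using \<open>v \<in> V\<close> V by (auto simp: less_eq_div_iff_mult_less_eq)
      ultimately show ?thesis using common_but_one by blast
    qed
  qed
qed

(* For 5 \<le> n \<le> 17, the k-th partition in the list for n has k as its only missing
   partial sum among 1, ..., length of the list. *)
definition small_critical_family :: "nat \<Rightarrow> nat multiset list" where
  "small_critical_family n = [
     [{#5#}],
     [{#4, 2#}, {#5, 1#}],
     [{#5, 2#}, {#6, 1#}],
     [{#6, 2#}, {#7, 1#}],
     [{#7, 2#}, {#8, 1#}],
     [{#5, 3, 2#}, {#6, 3, 1#}, {#8, 1, 1#}],
     [{#6, 3, 2#}, {#7, 3, 1#}, {#9, 1, 1#}],
     [{#5, 3, 2, 2#}, {#8, 3, 1#}, {#6, 4, 1, 1#}, {#9, 2, 1#}],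
     [{#6, 3, 2, 2#}, {#9, 3, 1#}, {#7, 4, 1, 1#}, {#10, 2, 1#}],
     [{#7, 3, 2, 2#}, {#6, 4, 3, 1#}, {#8, 4, 1, 1#}, {#6, 5, 2, 1#}, {#10, 2, 1, 1#}],
     [{#8, 3, 2, 2#}, {#7, 4, 3, 1#}, {#9, 4, 1, 1#}, {#7, 5, 2, 1#}, {#11, 2, 1, 1#}],
     [{#9, 3, 2, 2#}, {#8, 4, 3, 1#}, {#10, 4, 1, 1#}, {#8, 5, 2, 1#}, {#12, 2, 1, 1#}],
     [{#10, 3, 2, 2#}, {#9, 4, 3, 1#}, {#11, 4, 1, 1#}, {#9, 5, 2, 1#}, {#13, 2, 1, 1#}]
   ] ! (n - 5)"

lemma critical_family_small:
  assumes "5 \<le> n" "n \<le> 17"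
  shows "\<exists>X. critical_family n X \<and> real (card X) > real n / 2 - log 2 (real n)"
proof -
  define xs where "xs = small_critical_family n"
  define V where "V = {1..length xs}"
  have data: "V \<subseteq> {1..n div 2} \<and>
      (\<forall>v\<in>V. is_partition n (xs ! (v - 1))) \<and>
      (\<forall>v\<in>V. v \<notin> subset_sums (xs ! (v - 1))) \<and>
      (\<forall>v\<in>V. \<forall>u\<in>V. u \<noteq> v \<longrightarrow> u \<in> subset_sums (xs ! (v - 1))) \<and>
      (\<forall>i\<in>{1..n div 2} - V. \<exists>v\<in>V. i \<notin> subset_sums (xs ! (v - 1))) \<and>
      real n + 2 < 2 * real (card V) + 2 * real (floorlog 2 n)"
  proof -
    have "n = 5 \<or> n = 6 \<or> n = 7 \<or> n = 8 \<or> n = 9 \<or> n = 10 \<or> n = 11 \<or> n = 12 \<or>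
        n = 13 \<or> n = 14 \<or> n = 15 \<or> n = 16 \<or> n = 17"
      using assms by arith
    then show ?thesis
      unfolding xs_def V_def
      by (elim disjE) (simp_all add: small_critical_family_def is_partition_def atLeastAtMost_upt
          compute_floorlog)
  qed
  have "critical_family n ((\<lambda>v. xs ! (v - 1)) ` V)" "card ((\<lambda>v. xs ! (v - 1)) ` V) = card V"
    using critical_family_image[of V n "\<lambda>v. xs ! (v - 1)"] data by auto
  moreover have "real n / 2 - log 2 (real n) < real (card V)"
    using data floorlog_le_log[of n] assms by simp
  ultimately show ?thesis by metis
qed

locale large_critical =
  fixes n :: nat
  assumes large: "18 \<le> n"
begin

definition half :: nat where "half = n div 2"
definition sixth :: nat where "sixth = (half - 1) div 3"
definition special :: bool where "special \<longleftrightarrow> n mod 6 = 0 \<or> n mod 4 = 2"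
definition exceptional :: "nat set" where
  "exceptional = halvings sixth \<union> (if special then {half} else {})"
definition regular :: "nat set" where "regular = {1..half} - exceptional"
(* A partition avoiding n/3 (for 6 dvd n) or n/4 (for n mod 4 = 2) but no other regular value
   would have to avoid n/2 as well; so n/2 is made exceptional in these cases and partnered
   with that value. *)
definition partner :: "nat \<Rightarrow> nat" where
  "partner w = (if w = half then if n mod 6 = 0 then n div 3 else n div 4 else half - w)"
definition isolating :: "nat \<Rightarrow> nat multiset \<Rightarrow> bool" where
  "isolating v x \<longleftrightarrow> is_partition n x \<and> v \<notin> subset_sums x \<and>
     (\<forall>u\<in>regular. u \<noteq> v \<longrightarrow> u \<in> subset_sums x) \<and>
     (\<forall>w\<in>exceptional. partner w = v \<longrightarrow> w \<notin> subset_sums x)"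

lemma half_bounds: "2 * half \<le> n" "n \<le> 2 * half + 1"
  unfolding half_def by auto

lemma sixth_bounds: "3 * sixth + 1 \<le> half" "half \<le> 3 * sixth + 3" "2 \<le> sixth"
  using large unfolding sixth_def half_def by auto

lemma special_even: "special \<Longrightarrow> n = 2 * half"
  unfolding special_def half_def by presburger

lemma halvings_sixth_bounds: "w \<in> halvings sixth \<Longrightarrow> 1 \<le> w \<and> w \<le> sixth"
  using halvings_bounds[of w sixth] by auto

lemma mem_regular:
  "u \<in> regular \<longleftrightarrow> 1 \<le> u \<and> u \<le> half \<and> u \<notin> halvings sixth \<and> \<not> (special \<and> u = half)"
  unfolding regular_def exceptional_def by auto

lemma exceptional_subset: "exceptional \<subseteq> {1..half}"
proof -
  have "halvings sixth \<subseteq> {1..half}"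
    using halvings_sixth_bounds sixth_bounds by force
  then show ?thesis unfolding exceptional_def using sixth_bounds by auto
qed

lemma partner_cases:
  assumes "w \<in> exceptional" "partner w = v"
  shows "w \<in> halvings sixth \<and> w + v = half \<or>
    w = half \<and> special \<and> (if n mod 6 = 0 then 3 * v = n else n = 4 * v + 2)"
proof (cases "w \<in> halvings sixth")
  case True
  then have "w \<noteq> half" "w \<le> half" using halvings_sixth_bounds sixth_bounds by fastforce+
  then show ?thesis using True assms(2) by (auto simp: partner_def)
next
  case False
  then have "w = half" "special" using assms(1) by (auto simp: exceptional_def split: if_splits)
  then show ?thesis
    using assms(2) unfolding partner_def special_def by auto presburger+
qed

lemma partner_regular:
  assumes "w \<in> exceptional" shows "partner w \<in> regular"
proof (cases "w \<in> halvings sixth")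
  case True
  then have "1 \<le> w" "w \<le> sixth" by (auto dest: halvings_sixth_bounds)
  moreover from this have "partner w = half - w" using sixth_bounds by (simp add: partner_def)
  ultimately show ?thesis
    unfolding mem_regular using sixth_bounds by (auto dest: halvings_sixth_bounds)
next
  case False
  then have "w = half" "special" using assms by (auto simp: exceptional_def split: if_splits)
  show ?thesis
  proof (cases "n mod 6 = 0")
    case True
    then have "partner w = n div 3" "n = 6 * (n div 6)" using \<open>w = half\<close> by (auto simp: partner_def)
    then show ?thesis
      unfolding mem_regular using sixth_bounds special_even[OF \<open>special\<close>]
      by (auto dest: halvings_sixth_bounds)
  next
    case False
    then have "partner w = n div 4" using \<open>w = half\<close> by (simp add: partner_def)
    moreover have "n = 4 * (n div 4) + 2" using \<open>special\<close> False unfolding special_def by presburger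
    ultimately show ?thesis
      unfolding mem_regular using sixth_bounds special_even[OF \<open>special\<close>]
      by (auto dest: halvings_sixth_bounds)
  qed
qed

lemma isolating_half:
  assumes "\<not> special" shows "\<exists>x. isolating half x"
proof -
  have "\<exists>S. gap_partition half n S"
    by (intro gap_partition_exists) (use half_bounds sixth_bounds in arith)+
  then obtain S where S: "gap_partition half n S" ..
  have "isolating half S"
    unfolding isolating_def
  proof (intro conjI ballI impI)
    show "is_partition n S" using S by (simp add: gap_partition_def)
    show "half \<notin> subset_sums S" by (simp add: mem_subset_sums_gap_partition[OF S])
    show "u \<in> subset_sums S" if "u \<in> regular" "u \<noteq> half" for u
      using that half_bounds by (auto simp: mem_subset_sums_gap_partition[OF S] mem_regular)
    show "w \<notin> subset_sums S" if "w \<in> exceptional" "partner w = half" for w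
      using partner_cases[OF that] assms halvings_sixth_bounds by auto
  qed
  then show ?thesis ..
qed

lemma isolating_third:
  assumes "n mod 6 = 0" shows "\<exists>x. isolating (n div 3) x"
proof -
  define k where "k = n div 6"
  have k: "n = 6 * k" "half = 3 * k" "sixth = k - 1" "n div 3 = 2 * k"
    using assms sixth_bounds unfolding k_def half_def sixth_def by auto
  have "\<exists>S. gap_partition sixth (half - 1) S"
    by (intro gap_partition_exists) (use k sixth_bounds in arith)+
  then obtain S where S: "gap_partition sixth (half - 1) S" ..
  note sums = mem_subset_sums_add_mset mem_subset_sums_gap_partition[OF S]
  have "isolating (n div 3) (add_mset (half + 1) S)"
    unfolding isolating_def
  proof (intro conjI ballI impI)
    show "is_partition n (add_mset (half + 1) S)"
      using is_partition_add_mset[of "half - 1" S "half + 1"] S k sixth_bounds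
      by (simp add: gap_partition_def)
    show "n div 3 \<notin> subset_sums (add_mset (half + 1) S)"
      unfolding sums using k by arith
    have "special" using assms by (simp add: special_def)
    have "sixth \<in> halvings sixth" using sixth_bounds by (simp add: self_in_halvings)
    show "u \<in> subset_sums (add_mset (half + 1) S)" if "u \<in> regular" "u \<noteq> n div 3" for u
    proof -
      have "1 \<le> u" "u \<le> half" "u \<noteq> sixth" "u \<noteq> half"
        using that(1) \<open>special\<close> \<open>sixth \<in> halvings sixth\<close> unfolding mem_regular by auto
      then have "u \<le> half - 1 \<and> u \<noteq> sixth \<and> u \<noteq> half - 1 - sixth"
        using that(2) k by arith
      then show ?thesis unfolding sums by blast
    qed
    show "w \<notin> subset_sums (add_mset (half + 1) S)"
      if "w \<in> exceptional" "partner w = n div 3" for w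
    proof -
      have "w = half" using partner_cases[OF that] halvings_sixth_bounds k by force
      then show ?thesis unfolding sums using k by arith
    qed
  qed
  then show ?thesis ..
qed

lemma isolating_quarter:
  assumes "n mod 4 = 2" shows "\<exists>x. isolating (n div 4) x"
proof -
  define v where "v = n div 4"
  have v: "n = 4 * v + 2" "half = 2 * v + 1"
    using assms unfolding v_def half_def by presburger+
  have "\<exists>S. gap_partition v (3 * v + 1) S"
    by (intro gap_partition_exists) (use v large in arith)+
  then obtain S where S: "gap_partition v (3 * v + 1) S" ..
  note sums = mem_subset_sums_add_mset mem_subset_sums_gap_partition[OF S]
  have "isolating v (add_mset (v + 1) S)"
    unfolding isolating_def
  proof (intro conjI ballI impI)
    show "is_partition n (add_mset (v + 1) S)"
      using is_partition_add_mset[of "3 * v + 1" S "v + 1"] S v by (simp add: gap_partition_def)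
    show "v \<notin> subset_sums (add_mset (v + 1) S)"
      unfolding sums by arith
    have "special" using assms by (simp add: special_def)
    show "u \<in> subset_sums (add_mset (v + 1) S)" if "u \<in> regular" "u \<noteq> v" for u
    proof -
      have "1 \<le> u" "u \<le> half" "u \<noteq> half"
        using that(1) \<open>special\<close> unfolding mem_regular by auto
      then have "u \<le> 3 * v + 1 \<and> u \<noteq> v \<and> u \<noteq> 3 * v + 1 - v"
        using that(2) v by arith
      then show ?thesis unfolding sums by blast
    qed
    show "w \<notin> subset_sums (add_mset (v + 1) S)"
      if "w \<in> exceptional" "partner w = v" for w
    proof -
      have "\<not> (w \<in> halvings sixth \<and> w + v = half)"
        using halvings_sixth_bounds[of w] sixth_bounds v by auto
      then have "w = half" using partner_cases[OF that] by blast
      then show ?thesis unfolding sums using v by arith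
    qed
  qed
  then show ?thesis unfolding v_def ..
qed

lemma isolating_near_half:
  assumes v: "v \<in> regular" "v \<noteq> half" "n \<le> 3 * v"
    and not_third: "\<not> (n mod 6 = 0 \<and> 3 * v = n)"
  shows "\<exists>x. isolating v x"
proof -
  have "1 \<le> v" "v < half" using v(1,2) by (auto simp: mem_regular)
  define d where "d = half - v"
  have d: "v + d = half" "1 \<le> d" using \<open>v < half\<close> by (simp_all add: d_def)
  have "d \<le> sixth"
  proof (rule ccontr)
    assume "\<not> d \<le> sixth"
    then have "n = 3 * v" "n = 6 * sixth + 6"
      using d v(3) half_bounds sixth_bounds by linarith+
    then show False using not_third by presburger
  qed
  obtain w where w: "w \<in> halvings sixth" "d \<le> w" "w < 2 * d"
    and w_eq: "d \<in> halvings sixth \<Longrightarrow> w = d"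
  proof (cases "d \<in> halvings sixth")
    case True
    then show ?thesis using that[of d] d(2) by simp
  next
    case False
    then show ?thesis using that halvings_dense[OF d(2) \<open>d \<le> sixth\<close>] by blast
  qed
  have "1 \<le> w" "w \<le> sixth" "w = sixth \<or> 2 * w \<le> sixth"
    using halvings_bounds[OF w(1)] halvings_sixth_bounds[OF w(1)] by auto
  have "9 \<le> half" using large half_bounds by linarith
  have "2 * w + 1 \<le> v" "v \<noteq> 3 * w + 2" "\<not> (w = 1 \<and> v = 7)"
    using \<open>w \<le> sixth\<close> \<open>w = sixth \<or> 2 * w \<le> sixth\<close> \<open>9 \<le> half\<close> \<open>d \<le> sixth\<close> d w(2,3) sixth_bounds
    by linarith+
  then have "\<exists>S. gap_partition w (v + w) S"
    by (intro gap_partition_exists \<open>1 \<le> w\<close>) arith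
  then obtain S where S: "gap_partition w (v + w) S" ..
  define c where "c = n - v - w"
  have c: "v + w + c = n" "v < c" using d w(3) half_bounds unfolding c_def by arith+
  note sums = mem_subset_sums_add_mset mem_subset_sums_gap_partition[OF S]
  (* Below half, add_mset c S misses exactly v and w; w is exceptional, and it is the partner
     value half - v whenever that value is exceptional. *)
  have "isolating v (add_mset c S)"
    unfolding isolating_def
  proof (intro conjI ballI impI)
    show "is_partition n (add_mset c S)"
      using is_partition_add_mset[of "v + w" S c] S c by (simp add: gap_partition_def)
    show "v \<notin> subset_sums (add_mset c S)" unfolding sums using c(2) by auto
    show "u \<in> subset_sums (add_mset c S)" if "u \<in> regular" "u \<noteq> v" for u
    proof -
      have "u \<le> half" "u \<noteq> w" using that(1) w(1) by (auto simp: mem_regular)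
      then have "u \<le> v + w \<and> u \<noteq> w \<and> u \<noteq> v + w - w"
        using that(2) w(2) d(1) by simp
      then show ?thesis unfolding sums by blast
    qed
    show "w' \<notin> subset_sums (add_mset c S)" if "w' \<in> exceptional" "partner w' = v" for w'
    proof -
      have "\<not> (if n mod 6 = 0 then 3 * v = n else n = 4 * v + 2)"
        using not_third v(3) by auto
      then have "w' \<in> halvings sixth" "w' = d"
        using partner_cases[OF that] d(1) by auto
      then have "w' = w" using w_eq by simp
      then show ?thesis unfolding sums using c(2) \<open>2 * w + 1 \<le> v\<close> by auto
    qed
  qed
  then show ?thesis ..
qed

lemma isolating_below_third:
  assumes v: "v \<in> regular" "3 * v < n" "n \<noteq> 4 * v + 2"
  shows "\<exists>x. isolating v x"
proof -
  have "1 \<le> v" "v \<le> half" using v(1) by (auto simp: mem_regular)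
  have "\<exists>S. gap_partition v n S"
    by (intro gap_partition_exists) (use v large \<open>1 \<le> v\<close> in arith)+
  then obtain S where S: "gap_partition v n S" ..
  have "isolating v S"
    unfolding isolating_def
  proof (intro conjI ballI impI)
    show "is_partition n S" using S by (simp add: gap_partition_def)
    show "v \<notin> subset_sums S" by (simp add: mem_subset_sums_gap_partition[OF S])
    show "u \<in> subset_sums S" if "u \<in> regular" "u \<noteq> v" for u
    proof -
      have "u \<le> half" using that(1) by (simp add: mem_regular)
      then show ?thesis
        unfolding mem_subset_sums_gap_partition[OF S] using that(2) v(2) half_bounds by arith
    qed
    show "w \<notin> subset_sums S" if "w \<in> exceptional" "partner w = v" for w
    proof -
      have "\<not> (w \<in> halvings sixth \<and> w + v = half)"
        using halvings_sixth_bounds[of w] sixth_bounds half_bounds v(2) by auto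
      moreover have "\<not> (if n mod 6 = 0 then 3 * v = n else n = 4 * v + 2)"
        using v(2,3) by auto
      ultimately show ?thesis using partner_cases[OF that] by blast
    qed
  qed
  then show ?thesis ..
qed

lemma isolating_exists:
  assumes "v \<in> regular" shows "\<exists>x. isolating v x"
proof -
  consider "v = half" | "n mod 6 = 0" "3 * v = n" | "v \<noteq> half" "n \<le> 3 * v" "\<not> (n mod 6 = 0 \<and> 3 * v = n)"
    | "n = 4 * v + 2" | "3 * v < n" "n \<noteq> 4 * v + 2"
    by linarith
  then show ?thesis
  proof cases
    case 1
    then show ?thesis using assms isolating_half by (simp add: mem_regular)
  next
    case 2
    then show ?thesis using isolating_third by force
  next
    case 3
    then show ?thesis using isolating_near_half assms by blast
  next
    case 4
    then have "n mod 4 = 2" "v = n div 4" by presburger+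
    then show ?thesis using isolating_quarter by simp
  next
    case 5
    then show ?thesis using isolating_below_third assms by blast
  qed
qed

lemma card_regular_gt: "real n / 2 - log 2 (real n) < real (card regular)"
proof -
  have "card regular = half - card exceptional"
    unfolding regular_def using exceptional_subset by (simp add: card_Diff_subset finite_subset)
  moreover have "card exceptional \<le> half"
    using card_mono[OF _ exceptional_subset] by simp
  moreover have "card exceptional \<le> card (halvings sixth) + (if special then 1 else 0)"
    unfolding exceptional_def by (rule order_trans[OF card_Un_le]) simp
  moreover have "real (card (halvings sixth)) \<le> log 2 sixth + 1"
    using sixth_bounds by (intro card_halvings_le_log) simp
  moreover have "log 2 sixth + 2 < log 2 n"
  proof -
    have "log 2 sixth + 2 = log 2 (2 ^ 2 * real sixth)"
      using sixth_bounds log_pow_cancel[of 2 2] by (subst log_mult) simp_all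
    also have "\<dots> < log 2 n"
    proof -
      have "4 * sixth < n" using sixth_bounds half_bounds by linarith
      then show ?thesis using sixth_bounds by simp
    qed
    finally show ?thesis .
  qed
  ultimately show ?thesis
    using special_even half_bounds by (cases special) auto
qed

lemma critical_family_large:
  "\<exists>X. critical_family n X \<and> real (card X) > real n / 2 - log 2 (real n)"
proof -
  define f where "f v = (SOME x. isolating v x)" for v
  have f: "isolating v (f v)" if "v \<in> regular" for v
    unfolding f_def using isolating_exists[OF that] by (rule someI_ex)
  have V: "regular \<subseteq> {1..n div 2}" by (auto simp: regular_def half_def)
  have cover: "\<forall>i\<in>{1..n div 2} - regular. \<exists>v\<in>regular. i \<notin> subset_sums (f v)"
  proof
    fix i assume "i \<in> {1..n div 2} - regular"
    then have "i \<in> exceptional" by (auto simp: regular_def half_def)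
    then show "\<exists>v\<in>regular. i \<notin> subset_sums (f v)"
      using partner_regular f unfolding isolating_def by blast
  qed
  have "\<forall>v\<in>regular. is_partition n (f v)" "\<forall>v\<in>regular. v \<notin> subset_sums (f v)"
    "\<forall>v\<in>regular. \<forall>u\<in>regular. u \<noteq> v \<longrightarrow> u \<in> subset_sums (f v)"
    using f by (auto simp: isolating_def)
  note image = critical_family_image[OF V this cover]
  show ?thesis using image card_regular_gt by auto
qed

end

theorem proposition1p4:
  fixes n :: nat
  assumes "n \<ge> 5"
  shows "\<exists>X :: nat multiset set.
           (\<forall>x\<in>X. is_partition n x) \<and>
           \<not> (\<exists>i::nat. 1 \<le> i \<and> 2 * i \<le> n \<and> (\<forall>x\<in>X. is_partial_sum i x)) \<and>
           (\<forall>x\<in>X. \<exists>i::nat. 1 \<le> i \<and> 2 * i \<le> n \<and> (\<forall>y\<in>X - {x}. is_partial_sum i y)) \<and>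
           real (card X) > real n / 2 - log 2 (real n)"
proof -
  obtain X where "critical_family n X" "real (card X) > real n / 2 - log 2 (real n)"
  proof (cases "n \<le> 17")
    case True
    then show ?thesis using critical_family_small assms that by blast
  next
    case False
    then interpret large_critical n by unfold_locales simp
    show ?thesis using critical_family_large that by blast
  qed
  then show ?thesis unfolding critical_family_def by blast
qed

end
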